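(* Let $\mathcal H_A,\mathcal H_B$ be finite-dimensional Hilbert spaces, $|0_A\rangle\in\mathcal H_A$, $|0_B\rangle\in\mathcal H_B$ unit vectors, $|0\rangle=|0_A\rangle\otimes|0_B\rangle$, and let $|\phi\rangle\in\mathcal H_A\otimes\mathcal H_B$ be a unit vector (e.g. $|\phi\rangle=O(t)|0\rangle$ for a unitary $O(t)$). Decompose $|\phi\rangle=|x\rangle\otimes|0_B\rangle+|y\rangle$, where $|x\rangle=(\mathbb 1_A\otimes\langle 0_B|)|\phi\rangle\in\mathcal H_A$ and $(\mathbb 1_A\otimes\langle 0_B|)|y\rangle=0$. Fix $0<\epsilon<1$ and let $|\psi\rangle=(|0\rangle+\epsilon|\phi\rangle)/\sqrt{\mathcal N}$ with $\mathcal N=1+\epsilon^2+2\epsilon\,\mathrm{Re}\langle 0|\phi\rangle$, and $\rho_A=\operatorname{tr}_B|\psi\rangle\langle\psi|$. Set $\mu=\epsilon^2\langle y|y\rangle/\mathcal N$. Then $\mu\le\epsilon^2$, and for every $\alpha>1$, $$S_\alpha(\rho_A)\le \frac{\alpha}{\alpha-1}\log\frac{1}{1-\mu}\le\frac{\alpha}{\alpha-1}\log\frac{1}{1-\epsilon^2}.$$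
   Context: For a density matrix $\rho$, the Rényi entropy is $S_\alpha(\rho)=\frac{1}{1-\alpha}\log\operatorname{tr}\rho^\alpha$. One has $\rho_A=(1-\mu)|v\rangle\langle v|+\mu\,\omega$ with $|v\rangle=(|0_A\rangle+\epsilon|x\rangle)/\sqrt{\mathcal N(1-\mu)}$ a unit vector and $\omega=\operatorname{tr}_B|y\rangle\langle y|/\langle y|y\rangle$ (when $|y\rangle\neq 0$). *)

theory Defs
  imports "HOL-Analysis.Analysis" "Jordan_Normal_Form.Matrix" "Jordan_Normal_Form.Char_Poly"
begin

text \<open>Finite-dimensional Hilbert spaces are modelled as coordinate spaces C^n
  (vectors of type complex vec with dim = n).  The tensor product C^dA (x) C^dB is
  C^(dA*dB) with the basis |i> (x) |j> at index i*dB + j.\<close>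

definition braket :: "complex vec \<Rightarrow> complex vec \<Rightarrow> complex" where
  "braket u v = (\<Sum>i<dim_vec v. cnj (u $ i) * v $ i)"

definition tensor_vec :: "complex vec \<Rightarrow> complex vec \<Rightarrow> complex vec" where
  "tensor_vec u v = vec (dim_vec u * dim_vec v) (\<lambda>k. u $ (k div dim_vec v) * v $ (k mod dim_vec v))"

text \<open>(1_A (x) <b|) applied to a vector w of C^dA (x) C^dB, with b in C^dB.\<close>
definition contract_B :: "nat \<Rightarrow> complex vec \<Rightarrow> complex vec \<Rightarrow> complex vec" where
  "contract_B dA b w = vec dA (\<lambda>i. \<Sum>j<dim_vec b. cnj (b $ j) * w $ (i * dim_vec b + j))"

definition ketbra :: "complex vec \<Rightarrow> complex mat" where
  "ketbra v = mat (dim_vec v) (dim_vec v) (\<lambda>(i, j). v $ i * cnj (v $ j))"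

definition ptrace_B :: "nat \<Rightarrow> nat \<Rightarrow> complex mat \<Rightarrow> complex mat" where
  "ptrace_B dA dB M = mat dA dA (\<lambda>(i, i'). \<Sum>j<dB. M $$ (i * dB + j, i' * dB + j))"

text \<open>tr rho^alpha for a density matrix (Hermitian, PSD), via spectral calculus:
  sum of lambda^alpha over the eigenvalues counted with algebraic multiplicity.\<close>
definition trace_powr :: "complex mat \<Rightarrow> real \<Rightarrow> real" where
  "trace_powr \<rho> \<alpha> = (\<Sum>e\<in>{z. poly (char_poly \<rho>) z = 0}.
       real (order e (char_poly \<rho>)) * (Re e) powr \<alpha>)"

definition renyi_entropy :: "real \<Rightarrow> complex mat \<Rightarrow> real" where
  "renyi_entropy \<alpha> \<rho> = 1 / (1 - \<alpha>) * ln (trace_powr \<rho> \<alpha>)"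

end

theory Submission
  imports Defs "Jordan_Normal_Form.Spectral_Radius"
begin

text \<open>Put \<open>u = a0 + \<epsilon> x\<close>. Then \<open>sqrt N \<psi> = u \<otimes> b0 + \<epsilon> y\<close> with \<open>(1 \<otimes> \<langle>b0|) y = 0\<close>, so
  Cauchy--Schwarz in the \<open>B\<close> factor gives \<open>\<langle>u|\<rho>A|u\<rangle> \<ge> |\<langle>u \<otimes> b0|\<psi>\<rangle>|\<^sup>2 = |u|\<^sup>4 / N\<close>.
  Hence \<open>\<rho>A\<close> has an eigenvalue \<open>\<lambda> \<ge> |u|\<^sup>2 / N\<close>, and \<open>|x|\<^sup>2 + |y|\<^sup>2 = 1\<close> turns this into
  \<open>\<lambda> \<ge> 1 - \<mu>\<close>. For \<open>\<alpha> > 1\<close> the single term \<open>\<lambda>\<^sup>\<alpha>\<close> already bounds \<open>tr \<rho>A\<^sup>\<alpha>\<close> from below,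
  which is the first inequality. The bound \<open>\<mu> \<le> \<epsilon>\<^sup>2\<close> amounts to \<open>|y|\<^sup>2 \<le> N\<close>, and indeed
  \<open>N - |y|\<^sup>2 \<ge> (\<epsilon> + Re \<langle>a0|x\<rangle>)\<^sup>2\<close>.\<close>

lemma cmod_sum_cnj_mult_sq_le:
  fixes f g :: "'i \<Rightarrow> complex"
  shows "(cmod (\<Sum>i\<in>I. cnj (f i) * g i))\<^sup>2 \<le> (\<Sum>i\<in>I. (cmod (f i))\<^sup>2) * (\<Sum>i\<in>I. (cmod (g i))\<^sup>2)"
proof -
  have "cmod (\<Sum>i\<in>I. cnj (f i) * g i) \<le> (\<Sum>i\<in>I. cmod (f i) * cmod (g i))"
    by (rule order_trans[OF norm_sum]) (simp add: norm_mult)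
  hence "(cmod (\<Sum>i\<in>I. cnj (f i) * g i))\<^sup>2 \<le> (\<Sum>i\<in>I. cmod (f i) * cmod (g i))\<^sup>2"
    by (simp add: power_mono)
  also have "\<dots> \<le> (\<Sum>i\<in>I. (cmod (f i))\<^sup>2) * (\<Sum>i\<in>I. (cmod (g i))\<^sup>2)"
    by (rule Cauchy_Schwarz_ineq_sum)
  finally show ?thesis .
qed

lemma cmod_add_sq: "(cmod (p + q))\<^sup>2 = (cmod p)\<^sup>2 + (cmod q)\<^sup>2 + 2 * Re (cnj p * q)"
  unfolding cmod_power2 by (simp add: power2_eq_square algebra_simps)

definition sq_norm :: "complex vec \<Rightarrow> real" where
  "sq_norm v = (\<Sum>i<dim_vec v. (cmod (v $ i))\<^sup>2)"

definition quad_form :: "nat \<Rightarrow> complex mat \<Rightarrow> complex vec \<Rightarrow> complex" where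
  "quad_form n H w = (\<Sum>i<n. \<Sum>j<n. cnj (w $ i) * H $$ (i, j) * w $ j)"

definition hermitian_mat :: "nat \<Rightarrow> complex mat \<Rightarrow> bool" where
  "hermitian_mat n H \<longleftrightarrow> (\<forall>i<n. \<forall>j<n. H $$ (i, j) = cnj (H $$ (j, i)))"

definition positive_semidef :: "nat \<Rightarrow> complex mat \<Rightarrow> bool" where
  "positive_semidef n H \<longleftrightarrow>
     (\<forall>w\<in>carrier_vec n. Im (quad_form n H w) = 0 \<and> 0 \<le> Re (quad_form n H w))"

lemma braket_self: "braket v v = complex_of_real (sq_norm v)"
  unfolding braket_def sq_norm_def of_real_sum
  by (rule sum.cong) (simp_all only: complex_norm_square mult.commute)

lemma sq_norm_nonneg: "0 \<le> sq_norm v"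
  unfolding sq_norm_def by (simp add: sum_nonneg)

lemma sq_norm_carrier: "w \<in> carrier_vec n \<Longrightarrow> sq_norm w = (\<Sum>i<n. (cmod (w $ i))\<^sup>2)"
  unfolding sq_norm_def by simp

lemma sq_norm_pos:
  assumes "w \<in> carrier_vec n" "w \<noteq> 0\<^sub>v n"
  shows "0 < sq_norm w"
proof -
  obtain i where i: "i < n" "w $ i \<noteq> 0"
    using assms by (metis eq_vecI carrier_vecD index_zero_vec)
  have "(cmod (w $ i))\<^sup>2 \<le> sq_norm w"
    unfolding sq_norm_carrier[OF assms(1)] by (rule member_le_sum) (use i in auto)
  moreover have "0 < (cmod (w $ i))\<^sup>2" using i by simp
  ultimately show ?thesis by linarith
qed

lemma pow_mat_add:
  assumes "A \<in> carrier_mat n n"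
  shows "A ^\<^sub>m (k + l) = A ^\<^sub>m k * A ^\<^sub>m l"
proof (induction l)
  case 0
  show ?case using assms by simp
next
  case (Suc l)
  have "A ^\<^sub>m (k + Suc l) = (A ^\<^sub>m k * A ^\<^sub>m l) * A" using Suc by simp
  also have "\<dots> = A ^\<^sub>m k * (A ^\<^sub>m l * A)"
    by (rule assoc_mult_mat[of _ n n _ n _ n]) (use assms in auto)
  finally show ?case by simp
qed

lemma index_mult_mat_sum:
  assumes "A \<in> carrier_mat n n" "B \<in> carrier_mat n n" "i < n" "j < n"
  shows "(A * B) $$ (i, j) = (\<Sum>l<n. A $$ (i, l) * B $$ (l, j))"
  using assms by (auto simp: scalar_prod_def atLeast0LessThan intro!: sum.cong)

lemma index_mult_mat_vec_sum:
  assumes "A \<in> carrier_mat n n" "v \<in> carrier_vec n" "i < n"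
  shows "(A *\<^sub>v v) $ i = (\<Sum>j<n. A $$ (i, j) * v $ j)"
  using assms by (auto simp: scalar_prod_def atLeast0LessThan intro!: sum.cong)

lemma hermitian_matD: "hermitian_mat n H \<Longrightarrow> i < n \<Longrightarrow> j < n \<Longrightarrow> cnj (H $$ (i, j)) = H $$ (j, i)"
  unfolding hermitian_mat_def by (metis complex_cnj_cnj)

lemma hermitian_mat_mult_self:
  assumes P: "P \<in> carrier_mat n n" and h: "hermitian_mat n P"
  shows "hermitian_mat n (P * P)"
  unfolding hermitian_mat_def
proof (intro allI impI)
  fix i j assume ij: "i < n" "j < n"
  have "(P * P) $$ (i, j) = (\<Sum>l<n. P $$ (i, l) * P $$ (l, j))"
    by (rule index_mult_mat_sum[OF P P ij])
  also have "\<dots> = (\<Sum>l<n. cnj (P $$ (j, l) * P $$ (l, i)))"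
    using ij by (auto intro!: sum.cong simp: hermitian_matD[OF h] mult.commute)
  also have "\<dots> = cnj ((P * P) $$ (j, i))"
    by (simp add: index_mult_mat_sum[OF P P ij(2) ij(1)])
  finally show "(P * P) $$ (i, j) = cnj ((P * P) $$ (j, i))" .
qed

lemma pow_mat_double:
  assumes "A \<in> carrier_mat n n"
  shows "A ^\<^sub>m (2 ^ Suc k) = A ^\<^sub>m (2 ^ k) * A ^\<^sub>m (2 ^ k)"
  using pow_mat_add[OF assms, of "2 ^ k" "2 ^ k"] by (simp add: mult_2)

lemma hermitian_mat_pow_2:
  assumes B: "B \<in> carrier_mat n n" and h: "hermitian_mat n B"
  shows "hermitian_mat n (B ^\<^sub>m (2 ^ k))"
proof (induction k)
  case 0
  show ?case using h B by simp
next
  case (Suc k)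
  show ?case
    unfolding pow_mat_double[OF B] by (rule hermitian_mat_mult_self[OF pow_carrier_mat[OF B] Suc])
qed

lemma quad_form_altdef: "quad_form n P w = (\<Sum>l<n. cnj (w $ l) * (\<Sum>j<n. P $$ (l, j) * w $ j))"
  unfolding quad_form_def by (simp add: sum_distrib_left mult.assoc)

lemma quad_form_mult_self:
  assumes P: "P \<in> carrier_mat n n" and h: "hermitian_mat n P"
  shows "quad_form n (P * P) w = complex_of_real (\<Sum>l<n. (cmod (\<Sum>j<n. P $$ (l, j) * w $ j))\<^sup>2)"
proof -
  have "quad_form n (P * P) w = (\<Sum>i<n. \<Sum>j<n. \<Sum>l<n. cnj (w $ i) * P $$ (i, l) * P $$ (l, j) * w $ j)"
    unfolding quad_form_def
    by (auto simp: index_mult_mat_sum[OF P P] sum_distrib_left sum_distrib_right mult.assoc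
        intro!: sum.cong)
  also have "\<dots> = (\<Sum>l<n. \<Sum>i<n. \<Sum>j<n. cnj (w $ i) * P $$ (i, l) * P $$ (l, j) * w $ j)"
    by (subst sum.swap) (auto intro!: sum.cong sum.swap)
  also have "\<dots> = (\<Sum>l<n. (\<Sum>i<n. cnj (w $ i) * P $$ (i, l)) * (\<Sum>j<n. P $$ (l, j) * w $ j))"
    by (simp add: sum_product mult.assoc)
  also have "\<dots> = (\<Sum>l<n. cnj (\<Sum>j<n. P $$ (l, j) * w $ j) * (\<Sum>j<n. P $$ (l, j) * w $ j))"
    by (auto intro!: sum.cong simp: hermitian_matD[OF h] mult.commute cnj_sum)
  also have "\<dots> = complex_of_real (\<Sum>l<n. (cmod (\<Sum>j<n. P $$ (l, j) * w $ j))\<^sup>2)"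
    unfolding of_real_sum by (rule sum.cong) (simp_all only: complex_norm_square mult.commute)
  finally show ?thesis .
qed

lemma positive_semidef_eigenvalue_real_nonneg:
  assumes H: "H \<in> carrier_mat n n" and psd: "positive_semidef n H" and ev: "eigenvalue H e"
  shows "Im e = 0 \<and> 0 \<le> Re e"
proof -
  from ev obtain v where "eigenvector H v e" unfolding eigenvalue_def by auto
  hence v: "v \<in> carrier_vec n" and v0: "v \<noteq> 0\<^sub>v n" and eq: "H *\<^sub>v v = e \<cdot>\<^sub>v v"
    using H unfolding eigenvector_def by auto
  have "quad_form n H v = (\<Sum>l<n. cnj (v $ l) * (H *\<^sub>v v) $ l)"
    unfolding quad_form_altdef using index_mult_mat_vec_sum[OF H v] by simp
  also have "\<dots> = (\<Sum>l<n. e * (cnj (v $ l) * v $ l))"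
    unfolding eq using v by (auto intro!: sum.cong)
  also have "\<dots> = e * braket v v"
    using v by (simp add: braket_def sum_distrib_left)
  also have "\<dots> = e * complex_of_real (sq_norm v)"
    by (simp add: braket_self)
  finally have "quad_form n H v = e * complex_of_real (sq_norm v)" .
  with psd v have "Im e * sq_norm v = 0" "0 \<le> Re e * sq_norm v"
    unfolding positive_semidef_def by auto
  with sq_norm_pos[OF v v0] show ?thesis by (auto simp: zero_le_mult_iff)
qed

lemma eigenvalue_smult_mat:
  fixes H :: "complex mat"
  assumes H: "H \<in> carrier_mat n n" and k: "k \<noteq> 0" and ev: "eigenvalue (k \<cdot>\<^sub>m H) e"
  shows "eigenvalue H (e / k)"
proof -
  from ev obtain v where "eigenvector (k \<cdot>\<^sub>m H) v e" unfolding eigenvalue_def by auto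
  hence v: "v \<in> carrier_vec n" and v0: "v \<noteq> 0\<^sub>v n" and eq: "(k \<cdot>\<^sub>m H) *\<^sub>v v = e \<cdot>\<^sub>v v"
    using H unfolding eigenvector_def by auto
  have "(k \<cdot>\<^sub>m H) *\<^sub>v v = k \<cdot>\<^sub>v (H *\<^sub>v v)"
  proof (rule eq_vecI)
    fix i assume "i < dim_vec (k \<cdot>\<^sub>v (H *\<^sub>v v))"
    with H have i: "i < n" by simp
    show "((k \<cdot>\<^sub>m H) *\<^sub>v v) $ i = (k \<cdot>\<^sub>v (H *\<^sub>v v)) $ i"
      using index_mult_mat_vec_sum[OF H v i] index_mult_mat_vec_sum[of "k \<cdot>\<^sub>m H", OF _ v i] H i
      by (simp add: sum_distrib_left mult.assoc)
  qed (use H in simp)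
  with eq have "k \<cdot>\<^sub>v (H *\<^sub>v v) = e \<cdot>\<^sub>v v" by simp
  hence "inverse k \<cdot>\<^sub>v (k \<cdot>\<^sub>v (H *\<^sub>v v)) = inverse k \<cdot>\<^sub>v (e \<cdot>\<^sub>v v)" by simp
  hence "H *\<^sub>v v = (e / k) \<cdot>\<^sub>v v"
    using k by (simp add: smult_smult_assoc divide_inverse mult.commute)
  thus ?thesis unfolding eigenvalue_def eigenvector_def using H v v0 by auto
qed

lemma quad_form_pow_2_ge:
  assumes B: "B \<in> carrier_mat n n" and h: "hermitian_mat n B" and u: "u \<in> carrier_vec n"
    and q: "0 \<le> q" and u0: "0 < sq_norm u" and ray: "q * sq_norm u \<le> Re (quad_form n B u)"
  shows "q ^ (2 ^ k) * sq_norm u \<le> Re (quad_form n (B ^\<^sub>m (2 ^ k)) u)"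
proof (induction k)
  case 0
  show ?case using ray B by simp
next
  case (Suc k)
  let ?P = "B ^\<^sub>m (2 ^ k)"
  define S where "S = (\<Sum>l<n. (cmod (\<Sum>j<n. ?P $$ (l, j) * u $ j))\<^sup>2)"
  have qPP: "quad_form n (B ^\<^sub>m (2 ^ Suc k)) u = complex_of_real S"
    unfolding pow_mat_double[OF B] S_def
    by (rule quad_form_mult_self[OF pow_carrier_mat[OF B] hermitian_mat_pow_2[OF B h]])
  have "q ^ (2 ^ k) * sq_norm u \<le> cmod (quad_form n ?P u)"
    using Suc.IH complex_Re_le_cmod order_trans by blast
  hence "(q ^ (2 ^ k) * sq_norm u)\<^sup>2 \<le> (cmod (quad_form n ?P u))\<^sup>2"
    using q u0 by (intro power_mono) simp_all
  also have "\<dots> \<le> sq_norm u * S"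
    unfolding quad_form_altdef S_def sq_norm_carrier[OF u] by (rule cmod_sum_cnj_mult_sq_le)
  finally have "sq_norm u * (q ^ (2 ^ Suc k) * sq_norm u) \<le> sq_norm u * S"
    by (simp add: power2_eq_square power_mult_distrib power_add mult_2 algebra_simps)
  hence "q ^ (2 ^ Suc k) * sq_norm u \<le> S" using u0 by simp
  thus ?case using qPP by simp
qed

lemma cmod_quad_form_le:
  assumes P: "P \<in> carrier_mat n n" and nb: "norm_bound P C"
  shows "cmod (quad_form n P u) \<le> C * (\<Sum>i<n. cmod (u $ i))\<^sup>2"
proof -
  have "cmod (quad_form n P u) \<le> (\<Sum>i<n. \<Sum>j<n. cmod (cnj (u $ i) * P $$ (i, j) * u $ j))"
    unfolding quad_form_def by (rule order_trans[OF norm_sum], rule sum_mono, rule norm_sum)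
  also have "\<dots> \<le> (\<Sum>i<n. \<Sum>j<n. C * (cmod (u $ i) * cmod (u $ j)))"
  proof (intro sum_mono)
    fix i j assume "i \<in> {..<n}" "j \<in> {..<n}"
    hence "cmod (P $$ (i, j)) \<le> C" using nb P unfolding norm_bound_def by auto
    hence "cmod (P $$ (i, j)) * (cmod (u $ i) * cmod (u $ j)) \<le> C * (cmod (u $ i) * cmod (u $ j))"
      by (rule mult_right_mono) simp
    thus "cmod (cnj (u $ i) * P $$ (i, j) * u $ j) \<le> C * (cmod (u $ i) * cmod (u $ j))"
      by (simp add: norm_mult mult_ac)
  qed
  also have "\<dots> = C * (\<Sum>i<n. \<Sum>j<n. cmod (u $ i) * cmod (u $ j))"
    by (simp only: sum_distrib_left)
  also have "\<dots> = C * (\<Sum>i<n. cmod (u $ i))\<^sup>2"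
    by (simp only: power2_eq_square sum_product)
  finally show ?thesis .
qed

lemma hermitian_mat_smult_real:
  assumes H: "H \<in> carrier_mat n n" and h: "hermitian_mat n H"
  shows "hermitian_mat n (complex_of_real c \<cdot>\<^sub>m H)"
  unfolding hermitian_mat_def
proof (intro allI impI)
  fix i j assume ij: "i < n" "j < n"
  hence "H $$ (i, j) = cnj (H $$ (j, i))" using h unfolding hermitian_mat_def by blast
  thus "(complex_of_real c \<cdot>\<^sub>m H) $$ (i, j) = cnj ((complex_of_real c \<cdot>\<^sub>m H) $$ (j, i))"
    using H ij by simp
qed

lemma quad_form_smult_mat:
  "H \<in> carrier_mat n n \<Longrightarrow> quad_form n (k \<cdot>\<^sub>m H) w = k * quad_form n H w"
  unfolding quad_form_def by (simp add: sum_distrib_left mult_ac)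

lemma spectral_radius_scaled_less_1:
  assumes H: "H \<in> carrier_mat n n" and n: "0 < n" and r: "spectral_radius H < r"
  shows "spectral_radius (complex_of_real (1 / r) \<cdot>\<^sub>m H) < 1"
proof -
  let ?B = "complex_of_real (1 / r) \<cdot>\<^sub>m H"
  have "0 \<le> spectral_radius H" using spectral_radius_mem_max(1)[OF H n] by auto
  hence r0: "0 < r" using r by linarith
  have B: "?B \<in> carrier_mat n n" using H by simp
  from spectral_radius_mem_max(1)[OF B n] obtain l
    where l: "eigenvalue ?B l" and srB: "spectral_radius ?B = cmod l"
    unfolding spectrum_def by auto
  have "eigenvalue H (l / complex_of_real (1 / r))"
    by (rule eigenvalue_smult_mat[OF H _ l]) (use r0 in simp)
  hence "cmod (l / complex_of_real (1 / r)) \<le> spectral_radius H"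
    by (intro spectral_radius_mem_max(2)[OF H n]) (auto simp: spectrum_def)
  moreover have "cmod (l / complex_of_real (1 / r)) = cmod l * r"
    using r0 by (simp add: norm_divide norm_mult)
  ultimately have "cmod l * r < 1 * r" using r by simp
  thus ?thesis using r0 srB by (simp only: mult_less_cancel_right)
qed

text \<open>Without the spectral theorem at hand we argue by contradiction: if all
  eigenvalues were below \<open>c\<close>, then \<open>B = H / r\<close> for suitable \<open>r < c\<close> would have spectral radius
  below 1 and hence bounded powers, while by Cauchy--Schwarz the Rayleigh quotients of
  \<open>B ^ 2 ^ k\<close> grow like \<open>(c / r) ^ 2 ^ k\<close>.\<close>

lemma positive_semidef_eigenvalue_ge_rayleigh:
  assumes H: "H \<in> carrier_mat n n" and h: "hermitian_mat n H" and psd: "positive_semidef n H"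
    and u: "u \<in> carrier_vec n" and u0: "0 < sq_norm u" and c: "0 < c"
    and ray: "c * sq_norm u \<le> Re (quad_form n H u)"
  shows "\<exists>e. poly (char_poly H) e = 0 \<and> c \<le> Re e"
proof (rule ccontr)
  assume "\<not> ?thesis"
  hence lt: "\<And>e. eigenvalue H e \<Longrightarrow> Re e < c" using eigenvalue_root_char_poly[OF H] by force
  have n: "0 < n" using u0 u unfolding sq_norm_def by (cases n) auto
  from spectral_radius_mem_max(1)[OF H n] obtain e0
    where e0: "eigenvalue H e0" and sr: "spectral_radius H = cmod e0"
    unfolding spectrum_def by auto
  from positive_semidef_eigenvalue_real_nonneg[OF H psd e0] have "cmod e0 = Re e0"
    by (auto simp: cmod_eq_Re)
  with lt[OF e0] sr have "spectral_radius H < c" by simp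
  define r where "r = (spectral_radius H + c) / 2"
  have srr: "spectral_radius H < r" and rc: "r < c"
    using \<open>spectral_radius H < c\<close> unfolding r_def by auto
  have r0: "0 < r" using srr sr norm_ge_zero[of e0] by linarith
  define B where "B = complex_of_real (1 / r) \<cdot>\<^sub>m H"
  have B: "B \<in> carrier_mat n n" unfolding B_def using H by simp
  obtain C where C: "\<And>k. norm_bound (B ^\<^sub>m k) C"
    using spectral_radius_jnf_norm_bound_less_1_upper_triangular[OF B
        spectral_radius_scaled_less_1[OF H n srr, folded B_def]] by blast
  have hB: "hermitian_mat n B" unfolding B_def by (rule hermitian_mat_smult_real[OF H h])
  define q where "q = c / r"
  have q1: "1 < q" unfolding q_def using rc r0 by simp
  have rayB: "q * sq_norm u \<le> Re (quad_form n B u)"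
    using ray r0 unfolding B_def q_def quad_form_smult_mat[OF H] by (simp add: field_simps)
  define K where "K = C * (\<Sum>i<n. cmod (u $ i))\<^sup>2"
  have bound: "q ^ (2 ^ k) * sq_norm u \<le> K" for k
  proof -
    have "q ^ (2 ^ k) * sq_norm u \<le> Re (quad_form n (B ^\<^sub>m (2 ^ k)) u)"
      by (rule quad_form_pow_2_ge[OF B hB u _ u0 rayB]) (use q1 in simp)
    also have "\<dots> \<le> cmod (quad_form n (B ^\<^sub>m (2 ^ k)) u)" by (rule complex_Re_le_cmod)
    also have "\<dots> \<le> K" unfolding K_def by (rule cmod_quad_form_le[OF _ C]) (use B in simp)
    finally show ?thesis .
  qed
  obtain k where k: "K / sq_norm u < q ^ k" using real_arch_pow[OF q1] by blast
  have "K < q ^ k * sq_norm u" using k u0 by (simp add: divide_less_eq)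
  also have "\<dots> \<le> q ^ (2 ^ k) * sq_norm u"
    using u0 q1 less_exp[of k] by (intro mult_right_mono power_increasing) auto
  finally show False using bound[of k] by simp
qed

lemma renyi_entropy_le_eigenvalue:
  assumes \<rho>: "\<rho> \<in> carrier_mat n n" and e: "poly (char_poly \<rho>) e = 0" and eL: "L \<le> Re e"
    and L: "0 < L" and \<alpha>: "1 < \<alpha>"
  shows "renyi_entropy \<alpha> \<rho> \<le> \<alpha> / (\<alpha> - 1) * ln (1 / L)"
proof -
  let ?p = "char_poly \<rho>"
  have p0: "?p \<noteq> 0" using degree_monic_char_poly[OF \<rho>] by auto
  have "L powr \<alpha> \<le> Re e powr \<alpha>" by (rule powr_mono2) (use \<alpha> L eL in auto)
  also have "\<dots> \<le> real (order e ?p) * Re e powr \<alpha>"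
    using order_root[of ?p e] e p0 by (simp add: mult_le_cancel_right1)
  also have "\<dots> \<le> trace_powr \<rho> \<alpha>"
    unfolding trace_powr_def by (rule member_le_sum) (use poly_roots_finite[OF p0] e in auto)
  finally have "ln (L powr \<alpha>) \<le> ln (trace_powr \<rho> \<alpha>)"
    using L by (intro ln_mono) auto
  hence "\<alpha> * ln L \<le> ln (trace_powr \<rho> \<alpha>)"
    using L by (simp add: ln_powr)
  hence "ln (trace_powr \<rho> \<alpha>) / (1 - \<alpha>) \<le> \<alpha> * ln L / (1 - \<alpha>)"
    using \<alpha> by (simp add: divide_right_mono_neg)
  thus ?thesis using L \<alpha> by (simp add: renyi_entropy_def ln_div field_simps)
qed

lemma sum_lessThan_product_index: "(\<Sum>k<n * m. f k) = (\<Sum>i<n. \<Sum>j<(m::nat). f (i * m + j))"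
proof -
  have "(\<Sum>k\<in>{i * m..<i * m + m}. f k) = (\<Sum>j<m. f (i * m + j))" for i
    using sum.shift_bounds_nat_ivl[of f 0 "i * m" m] by (simp add: atLeast0LessThan add.commute)
  thus ?thesis using sum.nat_group[of f m n] by simp
qed

lemma product_index_less:
  assumes "i < n" "j < m"
  shows "i * m + j < n * (m::nat)"
proof -
  have "i * m + j < Suc i * m" using assms by simp
  also have "\<dots> \<le> n * m" using assms by (intro mult_le_mono1) simp
  finally show ?thesis .
qed

lemma product_index_div: "j < m \<Longrightarrow> (i * m + j) div m = (i::nat)"
  by simp

lemma product_index_mod: "j < m \<Longrightarrow> (i * m + j) mod m = (j::nat)"
  by simp

lemma dim_tensor_vec [simp]: "dim_vec (tensor_vec u v) = dim_vec u * dim_vec v"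
  unfolding tensor_vec_def by simp

lemma dim_contract_B [simp]: "dim_vec (contract_B n b w) = n"
  unfolding contract_B_def by simp

lemma index_ptrace_B_ketbra:
  assumes "dim_vec \<psi> = n * m" "i < n" "i' < n"
  shows "ptrace_B n m (ketbra \<psi>) $$ (i, i') = (\<Sum>j<m. \<psi> $ (i * m + j) * cnj (\<psi> $ (i' * m + j)))"
  using assms product_index_less[of i n _ m] product_index_less[of i' n _ m]
  by (auto simp: ptrace_B_def ketbra_def intro!: sum.cong)

lemma quad_form_ptrace_B_ketbra:
  assumes d: "dim_vec \<psi> = n * m"
  shows "quad_form n (ptrace_B n m (ketbra \<psi>)) w
       = complex_of_real (\<Sum>j<m. (cmod (\<Sum>i<n. cnj (w $ i) * \<psi> $ (i * m + j)))\<^sup>2)"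
proof -
  have "quad_form n (ptrace_B n m (ketbra \<psi>)) w
      = (\<Sum>i<n. \<Sum>i'<n. \<Sum>j<m. cnj (w $ i) * \<psi> $ (i * m + j) * (cnj (\<psi> $ (i' * m + j)) * w $ i'))"
    unfolding quad_form_def
    by (auto simp: index_ptrace_B_ketbra[OF d] sum_distrib_left sum_distrib_right mult_ac
        intro!: sum.cong)
  also have "\<dots> = (\<Sum>i<n. \<Sum>j<m. \<Sum>i'<n. 
      cnj (w $ i) * \<psi> $ (i * m + j) * (cnj (\<psi> $ (i' * m + j)) * w $ i'))"
    by (rule sum.cong[OF refl], rule sum.swap)
  also have "\<dots> = (\<Sum>j<m. \<Sum>i<n. \<Sum>i'<n. 
      cnj (w $ i) * \<psi> $ (i * m + j) * (cnj (\<psi> $ (i' * m + j)) * w $ i'))"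
    by (rule sum.swap)
  also have "\<dots> = (\<Sum>j<m. (\<Sum>i<n. cnj (w $ i) * \<psi> $ (i * m + j)) *
      (\<Sum>i'<n. cnj (\<psi> $ (i' * m + j)) * w $ i'))"
    by (simp only: sum_product)
  also have "\<dots> = (\<Sum>j<m. (\<Sum>i<n. cnj (w $ i) * \<psi> $ (i * m + j)) *
      cnj (\<Sum>i<n. cnj (w $ i) * \<psi> $ (i * m + j)))"
    by (simp add: mult.commute)
  also have "\<dots> = complex_of_real (\<Sum>j<m. (cmod (\<Sum>i<n. cnj (w $ i) * \<psi> $ (i * m + j)))\<^sup>2)"
    unfolding of_real_sum by (rule sum.cong) (simp_all only: complex_norm_square)
  finally show ?thesis .
qed

lemma hermitian_mat_ptrace_B_ketbra:
  "dim_vec \<psi> = n * m \<Longrightarrow> hermitian_mat n (ptrace_B n m (ketbra \<psi>))"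
  unfolding hermitian_mat_def by (auto simp: index_ptrace_B_ketbra mult.commute)

lemma positive_semidef_ptrace_B_ketbra:
  "dim_vec \<psi> = n * m \<Longrightarrow> positive_semidef n (ptrace_B n m (ketbra \<psi>))"
  unfolding positive_semidef_def by (simp add: quad_form_ptrace_B_ketbra sum_nonneg)

lemma contract_B_add:
  assumes "dim_vec v = n * dim_vec b" "dim_vec w = n * dim_vec b"
  shows "contract_B n b (v + w) = contract_B n b v + contract_B n b w"
  by (rule eq_vecI) (simp_all add: assms contract_B_def product_index_less sum.distrib distrib_left)

lemma contract_B_diff:
  assumes "dim_vec v = n * dim_vec b" "dim_vec w = n * dim_vec b"
  shows "contract_B n b (v - w) = contract_B n b v - contract_B n b w"
  by (rule eq_vecI)
    (simp_all add: assms contract_B_def product_index_less sum_subtractf right_diff_distrib)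

lemma contract_B_smult:
  assumes "dim_vec v = n * dim_vec b"
  shows "contract_B n b (c \<cdot>\<^sub>v v) = c \<cdot>\<^sub>v contract_B n b v"
  by (rule eq_vecI) (simp_all add: assms contract_B_def product_index_less sum_distrib_left mult_ac)

lemma contract_B_tensor_vec:
  assumes "dim_vec a = n"
  shows "contract_B n b (tensor_vec a b) = braket b b \<cdot>\<^sub>v a"
  by (rule eq_vecI)
    (simp_all add: assms contract_B_def tensor_vec_def braket_def product_index_less
      product_index_div product_index_mod sum_distrib_left sum_distrib_right mult_ac)

lemma braket_smult_right: "braket v (c \<cdot>\<^sub>v w) = c * braket v w"
  unfolding braket_def by (simp add: sum_distrib_left mult_ac)

lemma braket_tensor_vec:
  assumes a: "dim_vec a = n" and \<phi>: "dim_vec \<phi> = n * dim_vec b"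
  shows "braket (tensor_vec a b) \<phi> = braket a (contract_B n b \<phi>)"
proof -
  let ?m = "dim_vec b"
  have "braket (tensor_vec a b) \<phi>
      = (\<Sum>i<n. \<Sum>j<?m. cnj (tensor_vec a b $ (i * ?m + j)) * \<phi> $ (i * ?m + j))"
    unfolding braket_def \<phi> by (rule sum_lessThan_product_index)
  also have "\<dots> = (\<Sum>i<n. cnj (a $ i) * (\<Sum>j<?m. cnj (b $ j) * \<phi> $ (i * ?m + j)))"
    using a
    by (auto simp: tensor_vec_def product_index_less product_index_div product_index_mod
        sum_distrib_left mult_ac intro!: sum.cong)
  also have "\<dots> = braket a (contract_B n b \<phi>)"
    by (simp add: braket_def contract_B_def)
  finally show ?thesis .
qed

lemma sq_norm_tensor_vec_add_orth:
  assumes x: "dim_vec x = n" and y: "dim_vec y = n * dim_vec b" and orth: "contract_B n b y = 0\<^sub>v n"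
  shows "sq_norm (tensor_vec x b + y) = sq_norm x * sq_norm b + sq_norm y"
proof -
  let ?m = "dim_vec b"
  have row: "(\<Sum>j<?m. (cmod (x $ i * b $ j + y $ (i * ?m + j)))\<^sup>2)
      = (cmod (x $ i))\<^sup>2 * sq_norm b + (\<Sum>j<?m. (cmod (y $ (i * ?m + j)))\<^sup>2)" if i: "i < n" for i
  proof -
    have "(\<Sum>j<?m. cnj (b $ j) * y $ (i * ?m + j)) = 0"
      using arg_cong[OF orth, of "\<lambda>v. v $ i"] i by (simp add: contract_B_def)
    moreover have "(\<Sum>j<?m. (cmod (x $ i * b $ j + y $ (i * ?m + j)))\<^sup>2)
        = (cmod (x $ i))\<^sup>2 * sq_norm b + (\<Sum>j<?m. (cmod (y $ (i * ?m + j)))\<^sup>2)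
          + 2 * Re (cnj (x $ i) * (\<Sum>j<?m. cnj (b $ j) * y $ (i * ?m + j)))"
      by (simp add: cmod_add_sq sq_norm_def sum.distrib sum_distrib_left norm_mult
          power_mult_distrib Re_sum mult_ac)
    ultimately show ?thesis by simp
  qed
  have "sq_norm (tensor_vec x b + y) = (\<Sum>i<n. \<Sum>j<?m. (cmod (x $ i * b $ j + y $ (i * ?m + j)))\<^sup>2)"
    unfolding sq_norm_def using x y
    by (simp add: sum_lessThan_product_index tensor_vec_def product_index_less
        product_index_div product_index_mod)
  also have "\<dots> = sq_norm x * sq_norm b + sq_norm y"
    using x y
    by (simp add: row sum.distrib sq_norm_def sum_lessThan_product_index sum_distrib_right)
  finally show ?thesis .
qed

lemma sq_norm_contract_B_add_remainder:
  assumes \<phi>: "dim_vec \<phi> = n * dim_vec b" and b: "sq_norm b = 1"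
  shows "sq_norm (contract_B n b \<phi>) + sq_norm (\<phi> - tensor_vec (contract_B n b \<phi>) b) = sq_norm \<phi>"
proof -
  define x where "x = contract_B n b \<phi>"
  define y where "y = \<phi> - tensor_vec x b"
  have x: "dim_vec x = n" and y: "dim_vec y = n * dim_vec b"
    unfolding x_def y_def using \<phi> by simp_all
  have "contract_B n b y = x - braket b b \<cdot>\<^sub>v x"
    unfolding y_def using \<phi> x by (simp add: contract_B_diff contract_B_tensor_vec x_def)
  also have "\<dots> = 0\<^sub>v n"
    using b x by (intro eq_vecI) (simp_all add: braket_self)
  finally have "contract_B n b y = 0\<^sub>v n" .
  hence "sq_norm (tensor_vec x b + y) = sq_norm x + sq_norm y"
    using sq_norm_tensor_vec_add_orth[OF x y] b by simp
  moreover have "tensor_vec x b + y = \<phi>"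
    unfolding y_def using \<phi> x by (intro eq_vecI) simp_all
  ultimately show ?thesis unfolding x_def y_def by simp
qed

lemma sq_norm_add_smult:
  assumes "dim_vec v = dim_vec w"
  shows "sq_norm (v + complex_of_real t \<cdot>\<^sub>v w)
    = sq_norm v + t\<^sup>2 * sq_norm w + 2 * t * Re (braket v w)"
proof -
  have "sq_norm (v + complex_of_real t \<cdot>\<^sub>v w)
      = (\<Sum>i<dim_vec w. (cmod (v $ i))\<^sup>2 + t\<^sup>2 * (cmod (w $ i))\<^sup>2
          + 2 * t * Re (cnj (v $ i) * w $ i))"
    unfolding sq_norm_def using assms
    by (intro sum.cong) (simp_all add: cmod_add_sq norm_mult power_mult_distrib algebra_simps)
  also have "\<dots> = (\<Sum>i<dim_vec w. (cmod (v $ i))\<^sup>2) + t\<^sup>2 * (\<Sum>i<dim_vec w. (cmod (w $ i))\<^sup>2)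
      + 2 * t * (\<Sum>i<dim_vec w. Re (cnj (v $ i) * w $ i))"
    by (simp only: sum.distrib sum_distrib_left)
  also have "\<dots> = sq_norm v + t\<^sup>2 * sq_norm w + 2 * t * Re (braket v w)"
    using assms by (simp only: sq_norm_def braket_def Re_sum)
  finally show ?thesis .
qed

lemma cmod_braket_sq_le:
  assumes "dim_vec v = dim_vec w"
  shows "(cmod (braket v w))\<^sup>2 \<le> sq_norm v * sq_norm w"
  using cmod_sum_cnj_mult_sq_le[of "\<lambda>i. v $ i" "\<lambda>i. w $ i" "{..<dim_vec w}"] assms
  by (simp add: braket_def sq_norm_def)

lemma cmod_braket_contract_B_sq_le:
  assumes d: "dim_vec \<psi> = n * dim_vec b"
  shows "(cmod (braket w (contract_B n b \<psi>)))\<^sup>2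
    \<le> sq_norm b * Re (quad_form n (ptrace_B n (dim_vec b) (ketbra \<psi>)) w)"
proof -
  let ?m = "dim_vec b"
  define z where "z j = (\<Sum>i<n. cnj (w $ i) * \<psi> $ (i * ?m + j))" for j
  have "braket w (contract_B n b \<psi>) = (\<Sum>i<n. \<Sum>j<?m. cnj (w $ i) * (cnj (b $ j) * \<psi> $ (i * ?m + j)))"
    by (simp add: braket_def contract_B_def sum_distrib_left)
  also have "\<dots> = (\<Sum>j<?m. cnj (b $ j) * z j)"
    unfolding z_def by (subst sum.swap) (simp add: sum_distrib_left mult_ac)
  finally have "(cmod (braket w (contract_B n b \<psi>)))\<^sup>2 \<le> sq_norm b * (\<Sum>j<?m. (cmod (z j))\<^sup>2)"
    unfolding sq_norm_def by (simp only: cmod_sum_cnj_mult_sq_le)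
  thus ?thesis
    unfolding z_def quad_form_ptrace_B_ketbra[OF d] by simp
qed

lemma reduced_superposition_rayleigh:
  fixes s t :: complex
  assumes a: "dim_vec a = n" and \<phi>: "dim_vec \<phi> = n * dim_vec b" and b: "sq_norm b = 1"
  defines "u \<equiv> a + t \<cdot>\<^sub>v contract_B n b \<phi>"
  shows "(cmod s)\<^sup>2 * (sq_norm u)\<^sup>2
    \<le> Re (quad_form n (ptrace_B n (dim_vec b) (ketbra (s \<cdot>\<^sub>v (tensor_vec a b + t \<cdot>\<^sub>v \<phi>)))) u)"
proof -
  define \<psi> where "\<psi> = s \<cdot>\<^sub>v (tensor_vec a b + t \<cdot>\<^sub>v \<phi>)"
  have d: "dim_vec \<psi> = n * dim_vec b" unfolding \<psi>_def using a \<phi> by simp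
  have "contract_B n b \<psi> = s \<cdot>\<^sub>v u"
    unfolding \<psi>_def u_def using a \<phi> b
    by (simp add: contract_B_smult contract_B_add contract_B_tensor_vec braket_self)
  hence "braket u (contract_B n b \<psi>) = s * complex_of_real (sq_norm u)"
    by (simp add: braket_smult_right braket_self)
  with sq_norm_nonneg[of u]
  have "(cmod (braket u (contract_B n b \<psi>)))\<^sup>2 = (cmod s)\<^sup>2 * (sq_norm u)\<^sup>2"
    by (simp add: norm_mult power_mult_distrib)
  with cmod_braket_contract_B_sq_le[OF d, of u] b show ?thesis
    unfolding \<psi>_def by simp
qed

lemma reduced_superposition_eigenvalue:
  fixes s t :: complex
  assumes a: "dim_vec a = n" and \<phi>: "dim_vec \<phi> = n * dim_vec b" and b: "sq_norm b = 1"
    and s: "s \<noteq> 0" and u0: "0 < sq_norm (a + t \<cdot>\<^sub>v contract_B n b \<phi>)"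
  shows "\<exists>e. poly (char_poly
      (ptrace_B n (dim_vec b) (ketbra (s \<cdot>\<^sub>v (tensor_vec a b + t \<cdot>\<^sub>v \<phi>))))) e = 0
    \<and> (cmod s)\<^sup>2 * sq_norm (a + t \<cdot>\<^sub>v contract_B n b \<phi>) \<le> Re e"
proof -
  let ?u = "a + t \<cdot>\<^sub>v contract_B n b \<phi>"
  let ?\<psi> = "s \<cdot>\<^sub>v (tensor_vec a b + t \<cdot>\<^sub>v \<phi>)"
  have d: "dim_vec ?\<psi> = n * dim_vec b" using a \<phi> by simp
  have \<rho>: "ptrace_B n (dim_vec b) (ketbra ?\<psi>) \<in> carrier_mat n n"
    unfolding ptrace_B_def by (rule mat_carrier)
  have u: "?u \<in> carrier_vec n" using a by (intro carrier_vecI) simp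
  have "0 < (cmod s)\<^sup>2" using s by simp
  hence c: "0 < (cmod s)\<^sup>2 * sq_norm ?u" using u0 by (rule mult_pos_pos)
  have "(cmod s)\<^sup>2 * sq_norm ?u * sq_norm ?u
      \<le> Re (quad_form n (ptrace_B n (dim_vec b) (ketbra ?\<psi>)) ?u)"
    using reduced_superposition_rayleigh[OF a \<phi> b, of s t]
    by (simp only: power2_eq_square mult.assoc)
  thus ?thesis
    by (rule positive_semidef_eigenvalue_ge_rayleigh[OF \<rho> hermitian_mat_ptrace_B_ketbra[OF d]
          positive_semidef_ptrace_B_ketbra[OF d] u u0 c])
qed

lemma superposition_weight_bounds:
  fixes S T R \<epsilon> :: real
  assumes ST: "S + T = 1" and RS: "R\<^sup>2 \<le> S" and T: "0 \<le> T" and \<epsilon>: "0 < \<epsilon>" "\<epsilon> < 1"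
  defines "N \<equiv> 1 + \<epsilon>\<^sup>2 + 2 * \<epsilon> * R" and "V \<equiv> 1 + \<epsilon>\<^sup>2 * S + 2 * \<epsilon> * R"
  shows "0 < N" "0 < V" "\<epsilon>\<^sup>2 * T / N \<le> \<epsilon>\<^sup>2" "1 - \<epsilon>\<^sup>2 * T / N = V / N"
proof -
  have "R\<^sup>2 \<le> 1" using RS ST T by linarith
  hence "-1 \<le> R" by (simp add: abs_square_le_1 abs_le_iff)
  hence "0 \<le> 2 * \<epsilon> * (1 + R)" using \<epsilon> by simp
  moreover have "N - (1 - \<epsilon>)\<^sup>2 = 2 * \<epsilon> * (1 + R)"
    unfolding N_def by (simp add: power2_eq_square algebra_simps)
  moreover have "0 < (1 - \<epsilon>)\<^sup>2" using \<epsilon> by simp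
  ultimately show N: "0 < N" by linarith
  have "N - T - (\<epsilon> + R)\<^sup>2 = S - R\<^sup>2"
    unfolding N_def using ST by (simp add: power2_eq_square algebra_simps)
  hence TN: "T \<le> N" using RS by (smt (verit) zero_le_power2)
  hence le: "\<epsilon>\<^sup>2 * T \<le> \<epsilon>\<^sup>2 * N" by (simp add: mult_left_mono)
  thus "\<epsilon>\<^sup>2 * T / N \<le> \<epsilon>\<^sup>2" using N by (simp add: pos_divide_le_eq)
  have "\<epsilon>\<^sup>2 < 1" using \<epsilon> by (simp add: power_less_one_iff)
  hence "\<epsilon>\<^sup>2 * N < N" using N by simp
  have "\<epsilon>\<^sup>2 * S + \<epsilon>\<^sup>2 * T = \<epsilon>\<^sup>2" using ST by (metis distrib_left mult_1_right)
  hence V: "V = N - \<epsilon>\<^sup>2 * T" unfolding V_def N_def by linarith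
  show "0 < V" using V le \<open>\<epsilon>\<^sup>2 * N < N\<close> by linarith
  show "1 - \<epsilon>\<^sup>2 * T / N = V / N"
    unfolding V using N by (simp add: field_simps)
qed

lemma perturbed_state_large_eigenvalue:
  assumes a0_dim: "dim_vec a0 = n" and \<phi>_dim: "dim_vec \<phi> = n * dim_vec b0"
    and unit: "sq_norm a0 = 1" "sq_norm b0 = 1" "sq_norm \<phi> = 1" and \<epsilon>: "0 < \<epsilon>" "\<epsilon> < 1"
    and x_def: "x = contract_B n b0 \<phi>" and y_def: "y = \<phi> - tensor_vec x b0"
    and N_def: "N = 1 + \<epsilon>\<^sup>2 + 2 * \<epsilon> * Re (braket (tensor_vec a0 b0) \<phi>)"
    and \<rho>_def: "\<rho> = ptrace_B n (dim_vec b0) (ketbra (complex_of_real (1 / sqrt N) \<cdot>\<^sub>v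
      (tensor_vec a0 b0 + complex_of_real \<epsilon> \<cdot>\<^sub>v \<phi>)))"
    and \<mu>_def: "\<mu> = \<epsilon>\<^sup>2 * Re (braket y y) / N"
  shows "\<mu> \<le> \<epsilon>\<^sup>2" and "0 < 1 - \<mu>" and "\<exists>e. poly (char_poly \<rho>) e = 0 \<and> 1 - \<mu> \<le> Re e"
proof -
  define R where "R = Re (braket a0 x)"
  define s where "s = complex_of_real (1 / sqrt N)"
  define u where "u = a0 + complex_of_real \<epsilon> \<cdot>\<^sub>v x"
  have x: "dim_vec x = n" unfolding x_def by simp
  have xy: "sq_norm x + sq_norm y = 1"
    using sq_norm_contract_B_add_remainder[OF \<phi>_dim unit(2)] unit(3) unfolding x_def y_def by simp
  have "R\<^sup>2 \<le> (cmod (braket a0 x))\<^sup>2"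
    unfolding R_def by (metis abs_Re_le_cmod power2_abs power_mono abs_ge_zero)
  also have "\<dots> \<le> sq_norm x"
    using cmod_braket_sq_le[of a0 x] a0_dim x unit(1) by simp
  finally have Rx: "R\<^sup>2 \<le> sq_norm x" .
  have u: "sq_norm u = 1 + \<epsilon>\<^sup>2 * sq_norm x + 2 * \<epsilon> * R"
    unfolding u_def R_def using sq_norm_add_smult[of a0 x \<epsilon>] a0_dim x unit(1) by simp
  have N: "N = 1 + \<epsilon>\<^sup>2 + 2 * \<epsilon> * R"
    unfolding N_def R_def x_def using braket_tensor_vec[OF a0_dim \<phi>_dim] by simp
  have \<mu>: "\<mu> = \<epsilon>\<^sup>2 * sq_norm y / N" unfolding \<mu>_def by (simp add: braket_self)
  note weights = superposition_weight_bounds[OF xy Rx sq_norm_nonneg \<epsilon>, folded N u, folded \<mu>]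
  show "\<mu> \<le> \<epsilon>\<^sup>2" by (rule weights(3))
  show "0 < 1 - \<mu>" unfolding weights(4) using weights(1,2) by simp
  have "(cmod s)\<^sup>2 = 1 / N"
    unfolding s_def norm_of_real power2_abs using weights(1) by (simp add: power_divide)
  hence "(cmod s)\<^sup>2 * sq_norm u = 1 - \<mu>" unfolding weights(4) by simp
  moreover have "s \<noteq> 0" unfolding s_def using weights(1) by simp
  ultimately show "\<exists>e. poly (char_poly \<rho>) e = 0 \<and> 1 - \<mu> \<le> Re e"
    using reduced_superposition_eigenvalue[OF a0_dim \<phi>_dim unit(2) _
        weights(2)[unfolded u_def x_def], of s]
    unfolding \<rho>_def s_def u_def x_def by auto
qed

theorem mainTheorem1:
  fixes dA dB :: nat and a0 b0 \<phi> :: "complex vec" and \<epsilon> :: real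
  assumes a0_dim: "dim_vec a0 = dA" and b0_dim: "dim_vec b0 = dB"
    and \<phi>_dim: "dim_vec \<phi> = dA * dB"
    and a0_unit: "braket a0 a0 = 1" and b0_unit: "braket b0 b0 = 1"
    and \<phi>_unit: "braket \<phi> \<phi> = 1"
    and \<epsilon>_pos: "0 < \<epsilon>" and \<epsilon>_lt1: "\<epsilon> < 1"
  shows "let zero = tensor_vec a0 b0;
             x = contract_B dA b0 \<phi>;
             y = \<phi> - tensor_vec x b0;
             N = 1 + \<epsilon>\<^sup>2 + 2 * \<epsilon> * Re (braket zero \<phi>);
             \<psi> = complex_of_real (1 / sqrt N) \<cdot>\<^sub>v (zero + complex_of_real \<epsilon> \<cdot>\<^sub>v \<phi>);
             \<rho>A = ptrace_B dA dB (ketbra \<psi>);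
             \<mu> = \<epsilon>\<^sup>2 * Re (braket y y) / N
         in \<mu> \<le> \<epsilon>\<^sup>2 \<and>
            (\<forall>\<alpha>::real. \<alpha> > 1 \<longrightarrow>
               renyi_entropy \<alpha> \<rho>A \<le> \<alpha> / (\<alpha> - 1) * ln (1 / (1 - \<mu>)) \<and>
               \<alpha> / (\<alpha> - 1) * ln (1 / (1 - \<mu>)) \<le> \<alpha> / (\<alpha> - 1) * ln (1 / (1 - \<epsilon>\<^sup>2)))"
proof -
  define x where "x = contract_B dA b0 \<phi>"
  define y where "y = \<phi> - tensor_vec x b0"
  define N where "N = 1 + \<epsilon>\<^sup>2 + 2 * \<epsilon> * Re (braket (tensor_vec a0 b0) \<phi>)"
  define \<rho>A where "\<rho>A = ptrace_B dA dB (ketbra (complex_of_real (1 / sqrt N) \<cdot>\<^sub>v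
    (tensor_vec a0 b0 + complex_of_real \<epsilon> \<cdot>\<^sub>v \<phi>)))"
  define \<mu> where "\<mu> = \<epsilon>\<^sup>2 * Re (braket y y) / N"
  have unit: "sq_norm a0 = 1" "sq_norm b0 = 1" "sq_norm \<phi> = 1"
    using a0_unit b0_unit \<phi>_unit by (simp_all add: braket_self)
  note bounds = perturbed_state_large_eigenvalue[OF a0_dim \<phi>_dim[folded b0_dim] unit \<epsilon>_pos \<epsilon>_lt1
      x_def y_def N_def \<rho>A_def[folded b0_dim] \<mu>_def]
  obtain e where e: "poly (char_poly \<rho>A) e = 0" "1 - \<mu> \<le> Re e" using bounds(3) by blast
  have \<rho>A: "\<rho>A \<in> carrier_mat dA dA" unfolding \<rho>A_def ptrace_B_def by (rule mat_carrier)
  show ?thesis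
    unfolding Let_def x_def[symmetric] y_def[symmetric] N_def[symmetric]
      \<rho>A_def[symmetric] \<mu>_def[symmetric]
  proof (intro conjI allI impI bounds(1))
    fix \<alpha> :: real assume \<alpha>: "1 < \<alpha>"
    show "renyi_entropy \<alpha> \<rho>A \<le> \<alpha> / (\<alpha> - 1) * ln (1 / (1 - \<mu>))"
      by (rule renyi_entropy_le_eigenvalue[OF \<rho>A e bounds(2) \<alpha>])
    have "0 < 1 - \<epsilon>\<^sup>2" using \<epsilon>_pos \<epsilon>_lt1 by (simp add: power_less_one_iff)
    hence "ln (1 - \<epsilon>\<^sup>2) \<le> ln (1 - \<mu>)" using bounds(1) by (intro ln_mono) auto
    hence "ln (1 / (1 - \<mu>)) \<le> ln (1 / (1 - \<epsilon>\<^sup>2))"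
      using \<open>0 < 1 - \<epsilon>\<^sup>2\<close> bounds(2) by (simp add: ln_div)
    thus "\<alpha> / (\<alpha> - 1) * ln (1 / (1 - \<mu>)) \<le> \<alpha> / (\<alpha> - 1) * ln (1 / (1 - \<epsilon>\<^sup>2))"
      by (rule mult_left_mono) (use \<alpha> in simp)
  qed
qed

end
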